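(* There is no finite (deterministic) matrix $\mathbb{M}$ such that $\vdash_{\mathbb{B}_\diamond}=\vdash_{\mathbb{M}}$ or $\rhd_{\mathbb{B}_\diamond}=\rhd_{\mathbb{M}}$.
   Context: $\mathbb{B}_\diamond=\langle\{0,1\},\cdot,\{1\}\rangle$ is the two-valued Nmatrix with one binary connective $\diamond$ (platypus) interpreted by $\diamond(0,0)=\{0\}$, $\diamond(1,1)=\{1\}$, $\diamond(0,1)=\diamond(1,0)=\{0,1\}$. For an Nmatrix/matrix $\mathbb{M}$ with designated set $D$, $\Gamma\rhd_{\mathbb{M}}\Delta$ iff every $\mathbb{M}$-valuation $v$ with $v(\Gamma)\subseteq D$ has $v(\Delta)\cap D\neq\emptyset$, and $\vdash_{\mathbb{M}}$ is its single-conclusion fragment ($\Gamma\vdash_{\mathbb{M}}\varphi$ iff $\Gamma\rhd_{\mathbb{M}}\{\varphi\}$). *)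

theory Defs
  imports Main
begin

datatype fm = Var nat | Dia fm fm

text \<open>The two-valued Nmatrix B_diamond; value 1 is True, 0 is False, designated set is {True}.\<close>
definition dia_B :: "bool \<Rightarrow> bool \<Rightarrow> bool set" where
  "dia_B x y = (if x = y then {x} else {False, True})"

definition B_val :: "(fm \<Rightarrow> bool) \<Rightarrow> bool" where
  "B_val v \<longleftrightarrow> (\<forall>a b. v (Dia a b) \<in> dia_B (v a) (v b))"

definition B_mc :: "fm set \<Rightarrow> fm set \<Rightarrow> bool" where
  "B_mc \<Gamma> \<Delta> \<longleftrightarrow> (\<forall>v. B_val v \<longrightarrow> (\<forall>g\<in>\<Gamma>. v g) \<longrightarrow> (\<exists>d\<in>\<Delta>. v d))"

definition B_sc :: "fm set \<Rightarrow> fm \<Rightarrow> bool" where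
  "B_sc \<Gamma> \<phi> \<longleftrightarrow> B_mc \<Gamma> {\<phi>}"

definition finite_matrix :: "'v set \<Rightarrow> ('v \<Rightarrow> 'v \<Rightarrow> 'v) \<Rightarrow> 'v set \<Rightarrow> bool" where
  "finite_matrix V f D \<longleftrightarrow> finite V \<and> V \<noteq> {} \<and> (\<forall>x\<in>V. \<forall>y\<in>V. f x y \<in> V) \<and> D \<subseteq> V"

definition M_val :: "'v set \<Rightarrow> ('v \<Rightarrow> 'v \<Rightarrow> 'v) \<Rightarrow> (fm \<Rightarrow> 'v) \<Rightarrow> bool" where
  "M_val V f v \<longleftrightarrow> (\<forall>p. v (Var p) \<in> V) \<and> (\<forall>a b. v (Dia a b) = f (v a) (v b))"

definition M_mc :: "'v set \<Rightarrow> ('v \<Rightarrow> 'v \<Rightarrow> 'v) \<Rightarrow> 'v set \<Rightarrow> fm set \<Rightarrow> fm set \<Rightarrow> bool" where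
  "M_mc V f D \<Gamma> \<Delta> \<longleftrightarrow> (\<forall>v. M_val V f v \<longrightarrow> v ` \<Gamma> \<subseteq> D \<longrightarrow> (\<exists>d\<in>\<Delta>. v d \<in> D))"

definition M_sc :: "'v set \<Rightarrow> ('v \<Rightarrow> 'v \<Rightarrow> 'v) \<Rightarrow> 'v set \<Rightarrow> fm set \<Rightarrow> fm \<Rightarrow> bool" where
  "M_sc V f D \<Gamma> \<phi> \<longleftrightarrow> M_mc V f D \<Gamma> {\<phi>}"

end

theory Submission
  imports Defs "HOL-Library.FuncSet"
begin

text \<open>In a finite matrix the unary term operations \<open>y \<mapsto> \<theta>\<^sub>n(y)\<close>, where
\<open>\<theta>\<^sub>0 = q\<close> and \<open>\<theta>\<^sub>n\<^sub>+\<^sub>1 = \<theta>\<^sub>n \<diamond> q\<close>, cannot all be distinct, so \<open>\<theta>\<^sub>i\<close> and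
\<open>\<theta>\<^sub>j\<close> are interchangeable for some \<open>i \<noteq> j\<close> and \<open>p \<diamond> \<theta>\<^sub>i \<turnstile> p \<diamond> \<theta>\<^sub>j\<close>.
In \<open>\<B>\<^sub>\<diamond>\<close> this consequence fails: under \<open>p = 1, q = 0\<close> every \<open>\<theta>\<^sub>n\<close> is \<open>0\<close>, so
the inputs of \<open>p \<diamond> \<theta>\<^sub>n\<close> disagree and the Nmatrix may choose \<open>p \<diamond> \<theta>\<^sub>i\<close>
true and \<open>p \<diamond> \<theta>\<^sub>j\<close> false.\<close>

primrec theta :: "nat \<Rightarrow> fm" where
  "theta 0 = Var 1"
| "theta (Suc n) = Dia (theta n) (Var 1)"

lemma theta_inject: "theta i = theta j \<longleftrightarrow> i = j"
proof (induction i arbitrary: j)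
  case 0 then show ?case by (cases j) auto
next
  case (Suc i) then show ?case by (cases j) auto
qed

primrec choice_val :: "(nat \<Rightarrow> bool) \<Rightarrow> fm set \<Rightarrow> fm \<Rightarrow> bool" where
  "choice_val e S (Var n) = e n"
| "choice_val e S (Dia a b) =
     (if choice_val e S a = choice_val e S b then choice_val e S a else Dia a b \<in> S)"

lemma B_val_choice_val: "B_val (choice_val e S)"
  unfolding B_val_def dia_B_def by auto

lemma choice_val_theta: "choice_val e S (theta n) = e 1"
  by (induction n) auto

lemma not_B_sc_Dia_theta:
  assumes "i \<noteq> j"
  shows "\<not> B_sc {Dia (Var 0) (theta i)} (Dia (Var 0) (theta j))"
proof
  let ?v = "choice_val (\<lambda>n. n = 0) {Dia (Var 0) (theta i)}"
  assume "B_sc {Dia (Var 0) (theta i)} (Dia (Var 0) (theta j))"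
  then have "\<forall>v. B_val v \<longrightarrow> v (Dia (Var 0) (theta i)) \<longrightarrow> v (Dia (Var 0) (theta j))"
    by (simp add: B_sc_def B_mc_def)
  then have "?v (Dia (Var 0) (theta i)) \<longrightarrow> ?v (Dia (Var 0) (theta j))"
    using B_val_choice_val by blast
  then show False
    using assms by (simp add: choice_val_theta theta_inject)
qed

lemma finite_self_maps_not_distinct:
  fixes g :: "nat \<Rightarrow> 'a \<Rightarrow> 'a"
  assumes "finite V" and "\<And>n y. y \<in> V \<Longrightarrow> g n y \<in> V"
  obtains i j where "i \<noteq> j" and "\<And>y. y \<in> V \<Longrightarrow> g i y = g j y"
proof -
  let ?r = "\<lambda>n. restrict (g n) V"
  have "range ?r \<subseteq> V \<rightarrow>\<^sub>E V"
    using assms(2) by auto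
  moreover have "finite (V \<rightarrow>\<^sub>E V)"
    using assms(1) by (simp add: finite_PiE)
  ultimately have "finite (range ?r)"
    by (rule finite_subset)
  then have "\<not> inj ?r"
    using finite_imageD infinite_UNIV_nat by blast
  then obtain i j where "i \<noteq> j" and eq: "?r i = ?r j"
    unfolding inj_def by blast
  moreover have "g i y = g j y" if "y \<in> V" for y
    using fun_cong[OF eq, of y] that by simp
  ultimately show thesis
    using that by blast
qed

primrec theta_op :: "('v \<Rightarrow> 'v \<Rightarrow> 'v) \<Rightarrow> nat \<Rightarrow> 'v \<Rightarrow> 'v" where
  "theta_op f 0 y = y"
| "theta_op f (Suc n) y = f (theta_op f n y) y"

lemma theta_op_closed:
  "(\<forall>x\<in>V. \<forall>y\<in>V. f x y \<in> V) \<Longrightarrow> y \<in> V \<Longrightarrow> theta_op f n y \<in> V"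
  by (induction n) auto

lemma M_val_theta: "M_val V f v \<Longrightarrow> v (theta n) = theta_op f n (v (Var 1))"
  by (induction n) (auto simp: M_val_def)

lemma finite_matrix_M_sc_Dia_theta:
  assumes "finite_matrix V f D"
  obtains i j where "i \<noteq> j" and "M_sc V f D {Dia (Var 0) (theta i)} (Dia (Var 0) (theta j))"
proof -
  have "finite V" and "\<forall>x\<in>V. \<forall>y\<in>V. f x y \<in> V"
    using assms by (auto simp: finite_matrix_def)
  then obtain i j where "i \<noteq> j" and same: "\<And>y. y \<in> V \<Longrightarrow> theta_op f i y = theta_op f j y"
    using finite_self_maps_not_distinct[of V "theta_op f"] theta_op_closed by metis
  have "v (Dia (Var 0) (theta i)) = v (Dia (Var 0) (theta j))" if v: "M_val V f v" for v
  proof -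
    have "v (Var 1) \<in> V"
      using v by (simp add: M_val_def)
    then have "v (theta i) = v (theta j)"
      using same by (simp add: M_val_theta[OF v])
    then show ?thesis
      using v by (simp add: M_val_def)
  qed
  then have "M_sc V f D {Dia (Var 0) (theta i)} (Dia (Var 0) (theta j))"
    unfolding M_sc_def M_mc_def by (metis image_subset_iff insertI1 singletonI)
  with \<open>i \<noteq> j\<close> show thesis
    using that by blast
qed

theorem theorem1:
  shows "\<not> (\<exists>(V :: 'v set) f D. finite_matrix V f D \<and> (B_sc = M_sc V f D \<or> B_mc = M_mc V f D))"
proof
  assume "\<exists>(V :: 'v set) f D. finite_matrix V f D \<and> (B_sc = M_sc V f D \<or> B_mc = M_mc V f D)"
  then obtain V :: "'v set" and f D where matrix: "finite_matrix V f D"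
    and "B_sc = M_sc V f D \<or> B_mc = M_mc V f D"
    by blast
  then have sc_eq: "B_sc = M_sc V f D"
    by (auto simp: B_sc_def[abs_def] M_sc_def[abs_def])
  obtain i j where "i \<noteq> j" and "M_sc V f D {Dia (Var 0) (theta i)} (Dia (Var 0) (theta j))"
    using finite_matrix_M_sc_Dia_theta[OF matrix] .
  with sc_eq show False
    using not_B_sc_Dia_theta by simp
qed

end
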